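(* Let $S$ be a finitely generated left cancellative semigroup with no infinite $\mathcal{R}$-classes. Suppose that for some finite generating set $A$ of $S$, the right Cayley graph $\Gamma_r(S,A)$ contains a ray $\mathbf{r}$ and there is an element $s\in S$ such that there are (directed) paths in $\Gamma_r(S,A)$ from infinitely many vertices of $\mathbf{r}$ to $s$. Then $\Omega S$ is infinite.
   Context: $S$ is left cancellative if $ax=ay$ implies $x=y$. $\mathcal{R}$ is Green's relation: $x\,\mathcal{R}\,y$ iff $xS^1=yS^1$. A digraph on $\Omega$ is a subset $\Gamma\subseteq\Omega\times\Omega$. A path is a sequence of pairwise distinct vertices $(v_0,v_1,\ldots)$ with $(v_i,v_{i+1})\in\Gamma$ (length 0 allowed); a ray is an infinite path; an anti-ray is an infinite sequence of distinct vertices with $(v_{i+1},v_i)\in\Gamma$. For infinite $\Sigma',\Sigma\subseteq\Omega$, $\Sigma'\preccurlyeq\Sigma$ means there are infinitely many pairwise vertex-disjoint paths from vertices of $\Sigma'$ to vertices of $\Sigma$. On rays and anti-rays $\preccurlyeq$ is a preorder with associated equivalence $\approx$; the ends are the $\approx$-classes of rays and anti-rays, and $\Omega\Gamma$ is the poset of ends. The right Cayley graph $\Gamma_r(S,A)$ has vertex set $S$ and edges $(x,xa)$, $x\in S$, $a\in A$. For finitely generated $S$, $\Omega S:=\Omega\Gamma_r(S,A)$ for any finite generating set $A$ (well defined up to isomorphism). *)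

theory Defs
  imports Main
begin

text \<open>Semigroups are modelled by the type class semigroup_mult: the semigroup S is
the whole (nonempty) carrier type.\<close>

definition left_cancellative :: "'a::semigroup_mult itself \<Rightarrow> bool" where
  "left_cancellative _ \<longleftrightarrow> (\<forall>a x y::'a. a * x = a * y \<longrightarrow> x = y)"

inductive_set sg_gen :: "'a::semigroup_mult set \<Rightarrow> 'a set" for A where
  base: "a \<in> A \<Longrightarrow> a \<in> sg_gen A"
| mult: "x \<in> sg_gen A \<Longrightarrow> y \<in> sg_gen A \<Longrightarrow> x * y \<in> sg_gen A"

definition generates :: "'a::semigroup_mult set \<Rightarrow> bool" where
  "generates A \<longleftrightarrow> sg_gen A = UNIV"

definition right_ideal1 :: "'a::semigroup_mult \<Rightarrow> 'a set" where
  "right_ideal1 x = insert x {x * s | s. True}"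

definition green_R :: "'a::semigroup_mult \<Rightarrow> 'a \<Rightarrow> bool" where
  "green_R x y \<longleftrightarrow> right_ideal1 x = right_ideal1 y"

definition R_class :: "'a::semigroup_mult \<Rightarrow> 'a set" where
  "R_class x = {y. green_R x y}"

definition is_path :: "('v \<times> 'v) set \<Rightarrow> 'v list \<Rightarrow> bool" where
  "is_path G p \<longleftrightarrow> p \<noteq> [] \<and> distinct p \<and> (\<forall>i. Suc i < length p \<longrightarrow> (p ! i, p ! Suc i) \<in> G)"

definition is_ray :: "('v \<times> 'v) set \<Rightarrow> (nat \<Rightarrow> 'v) \<Rightarrow> bool" where
  "is_ray G r \<longleftrightarrow> inj r \<and> (\<forall>i. (r i, r (Suc i)) \<in> G)"

definition is_antiray :: "('v \<times> 'v) set \<Rightarrow> (nat \<Rightarrow> 'v) \<Rightarrow> bool" where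
  "is_antiray G r \<longleftrightarrow> inj r \<and> (\<forall>i. (r (Suc i), r i) \<in> G)"

definition end_le :: "('v \<times> 'v) set \<Rightarrow> 'v set \<Rightarrow> 'v set \<Rightarrow> bool" where
  "end_le G X Y \<longleftrightarrow> (\<exists>P. infinite P \<and>
      (\<forall>p\<in>P. is_path G p \<and> hd p \<in> X \<and> last p \<in> Y) \<and>
      (\<forall>p\<in>P. \<forall>q\<in>P. p \<noteq> q \<longrightarrow> set p \<inter> set q = {}))"

definition end_equiv :: "('v \<times> 'v) set \<Rightarrow> (nat \<Rightarrow> 'v) \<Rightarrow> (nat \<Rightarrow> 'v) \<Rightarrow> bool" where
  "end_equiv G r s \<longleftrightarrow> end_le G (range r) (range s) \<and> end_le G (range s) (range r)"

definition rays_antirays :: "('v \<times> 'v) set \<Rightarrow> (nat \<Rightarrow> 'v) set" where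
  "rays_antirays G = {r. is_ray G r \<or> is_antiray G r}"

definition ends :: "('v \<times> 'v) set \<Rightarrow> (nat \<Rightarrow> 'v) set set" where
  "ends G = rays_antirays G // {(r, s). r \<in> rays_antirays G \<and> s \<in> rays_antirays G \<and> end_equiv G r s}"

definition right_cayley :: "'a::semigroup_mult set \<Rightarrow> ('a \<times> 'a) set" where
  "right_cayley A = {(x, x * a) | x a. a \<in> A}"

end

theory Submission
  imports Defs
begin

text \<open>Since s lies in the principal right ideal of every vertex of the ray r, while no vertex of r
lies in that of s (otherwise a whole tail of r would lie in one finite \<open>\<R>\<close>-class), the left
translates \<open>s\<^sup>k r\<close> are rays such that, by left cancellation, no path leads from \<open>s\<^sup>l r\<close> to \<open>s\<^sup>k r\<close>
for \<open>k < l\<close>. Hence they lie in pairwise distinct ends.\<close>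

lemma right_ideal1_self: "x \<in> right_ideal1 x"
  by (simp add: right_ideal1_def)

lemma right_ideal1_mult: "y \<in> right_ideal1 x \<Longrightarrow> y * w \<in> right_ideal1 x"
  by (auto simp: right_ideal1_def mult.assoc)

lemma right_ideal1_trans:
  assumes "x \<in> right_ideal1 y" "y \<in> right_ideal1 z"
  shows "x \<in> right_ideal1 z"
  using assms by (auto simp: right_ideal1_def mult.assoc intro: exI[of _ "_ * _"])

lemma green_R_if_mutual:
  "x \<in> right_ideal1 y \<Longrightarrow> y \<in> right_ideal1 x \<Longrightarrow> green_R x y"
  unfolding green_R_def by (metis right_ideal1_trans subsetI subset_antisym)

lemma right_ideal1_cancel:
  assumes "left_cancellative TYPE('a::semigroup_mult)" "(c::'a) * x \<in> right_ideal1 (c * y)"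
  shows "x \<in> right_ideal1 y"
proof -
  from assms(2) have "c * x = c * y \<or> (\<exists>w. c * x = c * (y * w))"
    by (auto simp: right_ideal1_def mult.assoc)
  with assms(1) show ?thesis
    unfolding left_cancellative_def right_ideal1_def by blast
qed

lemma right_ideal1_funpow_cancel:
  assumes "left_cancellative TYPE('a::semigroup_mult)"
    and "((*) (c::'a) ^^ k) x \<in> right_ideal1 (((*) c ^^ k) y)"
  shows "x \<in> right_ideal1 y"
  using assms(2) by (induction k) (auto dest: right_ideal1_cancel[OF assms(1)])

lemma rtrancl_right_cayley_right_ideal1:
  "(x, y) \<in> (right_cayley A)\<^sup>* \<Longrightarrow> y \<in> right_ideal1 x"
  by (induction rule: rtrancl_induct)
    (auto simp: right_cayley_def right_ideal1_self intro: right_ideal1_mult)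

lemma path_rtrancl:
  assumes "is_path G p"
  shows "(hd p, last p) \<in> G\<^sup>*"
proof -
  have "i < length p \<longrightarrow> (p ! 0, p ! i) \<in> G\<^sup>*" for i
    using assms by (induction i) (auto simp: is_path_def intro: rtrancl_into_rtrancl)
  moreover have "p \<noteq> []"
    using assms by (simp add: is_path_def)
  ultimately show ?thesis
    by (simp add: hd_conv_nth last_conv_nth)
qed

lemma ray_rtrancl:
  assumes "is_ray G r" "i \<le> m"
  shows "(r i, r m) \<in> G\<^sup>*"
  using assms(2)
proof (induction m rule: dec_induct)
  case (step m)
  then show ?case
    using assms(1) by (auto simp: is_ray_def intro: rtrancl_into_rtrancl)
qed simp

lemma end_le_rtrancl:
  assumes "end_le G X Y"
  obtains x y where "x \<in> X" "y \<in> Y" "(x, y) \<in> G\<^sup>*"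
proof -
  from assms obtain P where "infinite P" "\<forall>p\<in>P. is_path G p \<and> hd p \<in> X \<and> last p \<in> Y"
    unfolding end_le_def by blast
  then obtain p where "is_path G p" "hd p \<in> X" "last p \<in> Y"
    using infinite_imp_nonempty by blast
  then show thesis
    using that path_rtrancl by blast
qed

lemma end_equiv_refl_ray:
  assumes "is_ray G t"
  shows "end_equiv G t t"
proof -
  have "inj (\<lambda>n. [t n])"
    using assms by (simp add: is_ray_def inj_def)
  then have "infinite (range (\<lambda>n. [t n]))"
    by (simp add: finite_image_iff)
  moreover have "\<forall>p\<in>range (\<lambda>n. [t n]). is_path G p \<and> hd p \<in> range t \<and> last p \<in> range t"
    by (simp add: is_path_def)
  moreover have "\<forall>p\<in>range (\<lambda>n. [t n]). \<forall>q\<in>range (\<lambda>n. [t n]). p \<noteq> q \<longrightarrow> set p \<inter> set q = {}"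
    by auto
  ultimately show ?thesis
    unfolding end_equiv_def end_le_def by blast
qed

lemma infinite_ends_if_rays_pairwise_inequivalent:
  fixes t :: "nat \<Rightarrow> nat \<Rightarrow> 'v"
  assumes rays: "\<And>k. is_ray G (t k)"
    and inequiv: "\<And>k l. k \<noteq> l \<Longrightarrow> \<not> end_equiv G (t k) (t l)"
  shows "infinite (ends G)"
proof -
  define E where "E = {(x, y). x \<in> rays_antirays G \<and> y \<in> rays_antirays G \<and> end_equiv G x y}"
  have t_in: "t k \<in> rays_antirays G" for k
    using rays by (simp add: rays_antirays_def)
  have "inj (\<lambda>k. E `` {t k})"
  proof (rule injI)
    fix k l
    assume "E `` {t k} = E `` {t l}"
    moreover have "t l \<in> E `` {t l}"
      using t_in end_equiv_refl_ray[OF rays] by (simp add: E_def)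
    ultimately have "(t k, t l) \<in> E"
      by blast
    then have "end_equiv G (t k) (t l)"
      by (simp add: E_def)
    then show "k = l"
      using inequiv by blast
  qed
  then have "infinite (range (\<lambda>k. E `` {t k}))"
    by (simp add: finite_image_iff)
  moreover have "range (\<lambda>k. E `` {t k}) \<subseteq> ends G"
    unfolding ends_def E_def[symmetric] using t_in by (auto simp: quotient_def)
  ultimately show ?thesis
    using finite_subset by blast
qed

lemma ray_reaches_if_infinitely_many_vertices_reach:
  assumes "is_ray G r"
    and "infinite {v \<in> range r. \<exists>p. is_path G p \<and> hd p = v \<and> last p = s}"
  shows "(r m, s) \<in> G\<^sup>*"
proof -
  have "\<not> {v \<in> range r. \<exists>p. is_path G p \<and> hd p = v \<and> last p = s} \<subseteq> r ` {..<m}"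
    using assms(2) finite_subset by blast
  then obtain i p where "\<not> i < m" "is_path G p" "hd p = r i" "last p = s"
    by blast
  then show ?thesis
    using ray_rtrancl[OF assms(1)] path_rtrancl by (metis not_less rtrancl_trans)
qed

lemma ray_not_in_right_ideal1:
  fixes r :: "nat \<Rightarrow> 'a::semigroup_mult"
  assumes "\<forall>x::'a. finite (R_class x)"
    and ray: "is_ray (right_cayley A) r"
    and below: "\<And>m. s \<in> right_ideal1 (r m)"
  shows "r i \<notin> right_ideal1 s"
proof
  assume "r i \<in> right_ideal1 s"
  have "r m \<in> R_class (r i)" if "i \<le> m" for m
  proof -
    have "r m \<in> right_ideal1 (r i)"
      using ray_rtrancl[OF ray that] by (rule rtrancl_right_cayley_right_ideal1)
    moreover have "r i \<in> right_ideal1 (r m)"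
      using \<open>r i \<in> right_ideal1 s\<close> below by (rule right_ideal1_trans)
    ultimately show ?thesis
      by (simp add: R_class_def green_R_if_mutual)
  qed
  then have "r ` {i..} \<subseteq> R_class (r i)"
    by auto
  moreover have "infinite (r ` {i..})"
  proof -
    have "inj_on r {i..}"
      using ray by (auto simp: is_ray_def inj_on_def)
    then show ?thesis
      by (simp add: finite_image_iff infinite_Ici)
  qed
  ultimately show False
    using assms(1) finite_subset by blast
qed

lemma is_ray_left_translate:
  assumes "left_cancellative TYPE('a::semigroup_mult)" "is_ray (right_cayley A) r"
  shows "is_ray (right_cayley A) (\<lambda>n. (c::'a) * r n)"
proof -
  have "inj (\<lambda>n. c * r n)"
  proof (rule injI)
    fix m n
    assume "c * r m = c * r n"
    then have "r m = r n"
      using assms(1) unfolding left_cancellative_def by blast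
    then show "m = n"
      using assms(2) by (simp add: is_ray_def inj_eq)
  qed
  moreover have "(c * r n, c * r (Suc n)) \<in> right_cayley A" for n
  proof -
    have "(r n, r (Suc n)) \<in> right_cayley A"
      using assms(2) by (simp add: is_ray_def)
    then obtain a where "a \<in> A" "r (Suc n) = r n * a"
      by (auto simp: right_cayley_def)
    then show ?thesis
      unfolding right_cayley_def by (simp add: mult.assoc) blast
  qed
  ultimately show ?thesis
    by (simp add: is_ray_def)
qed

lemma is_ray_funpow_left_translate:
  assumes "left_cancellative TYPE('a::semigroup_mult)" "is_ray (right_cayley A) r"
  shows "is_ray (right_cayley A) (\<lambda>n. ((*) (c::'a) ^^ k) (r n))"
  by (induction k) (simp_all add: assms(2) is_ray_left_translate[OF assms(1)])

lemma no_path_between_left_translates: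
  assumes "left_cancellative TYPE('a::semigroup_mult)"
    and "\<forall>i. r i \<notin> right_ideal1 (s::'a)"
    and "k < l"
  shows "(((*) s ^^ l) (r j), ((*) s ^^ k) (r i)) \<notin> (right_cayley A)\<^sup>*"
proof
  assume "(((*) s ^^ l) (r j), ((*) s ^^ k) (r i)) \<in> (right_cayley A)\<^sup>*"
  moreover obtain d where "l = k + Suc d"
    using \<open>k < l\<close> less_imp_Suc_add by fastforce
  then have "((*) s ^^ l) (r j) = ((*) s ^^ k) (s * ((*) s ^^ d) (r j))"
    by (simp add: funpow_add funpow_swap1)
  ultimately have "((*) s ^^ k) (r i) \<in> right_ideal1 (((*) s ^^ k) (s * ((*) s ^^ d) (r j)))"
    by (metis rtrancl_right_cayley_right_ideal1)
  then have "r i \<in> right_ideal1 (s * ((*) s ^^ d) (r j))"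
    by (rule right_ideal1_funpow_cancel[OF assms(1)])
  then have "r i \<in> right_ideal1 s"
    using right_ideal1_mult[OF right_ideal1_self] by (rule right_ideal1_trans)
  with assms(2) show False
    by blast
qed

theorem mainTheorem11:
  fixes A :: "'a::semigroup_mult set" and r :: "nat \<Rightarrow> 'a" and s :: 'a
  assumes "left_cancellative TYPE('a)"
    and "\<forall>x::'a. finite (R_class x)"
    and "finite A" and "generates A"
    and "is_ray (right_cayley A) r"
    and "infinite {v \<in> range r. \<exists>p. is_path (right_cayley A) p \<and> hd p = v \<and> last p = s}"
  shows "infinite (ends (right_cayley A))"
proof -
  let ?G = "right_cayley A"
  define t where "t k n = ((*) s ^^ k) (r n)" for k n
  have rays: "is_ray ?G (t k)" for k
    unfolding t_def using is_ray_funpow_left_translate[OF assms(1,5)] .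
  have "s \<in> right_ideal1 (r m)" for m
    using ray_reaches_if_infinitely_many_vertices_reach[OF assms(5,6)]
    by (rule rtrancl_right_cayley_right_ideal1)
  then have not_below: "\<forall>i. r i \<notin> right_ideal1 s"
    using ray_not_in_right_ideal1[OF assms(2,5)] by blast
  have no_le: "\<not> end_le ?G (range (t l)) (range (t k))" if "k < l" for k l
  proof
    assume "end_le ?G (range (t l)) (range (t k))"
    then obtain x y where "x \<in> range (t l)" "y \<in> range (t k)" "(x, y) \<in> ?G\<^sup>*"
      by (rule end_le_rtrancl)
    then show False
      using no_path_between_left_translates[OF assms(1) not_below that] unfolding t_def by blast
  qed
  have "\<not> end_equiv ?G (t k) (t l)" if "k \<noteq> l" for k l
    using no_le that unfolding end_equiv_def by (cases k l rule: linorder_cases) auto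
  with rays show ?thesis
    by (rule infinite_ends_if_rays_pairwise_inequivalent)
qed

end
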